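(* Let $H$ be a finite-dimensional real Hilbert space, $C\subset H$ a nonempty closed convex set, and $A,F:H\to H$ Lipschitz continuous operators with Lipschitz constants $L_A$ and $L_F$, respectively. Assume the couple $(A,F)$ is $\gamma$-strongly monotone for some $\gamma>0$. Then: (i) $A$ and $F$ are bijective and have Lipschitz continuous inverses; moreover, for all $u,v\in H$, $$\frac{1}{L_F}\|u-v\|\le\|F^{-1}u-F^{-1}v\|\le\frac{L_A}{\gamma}\|u-v\|,\qquad \frac{1}{L_A}\|u-v\|\le\|A^{-1}u-A^{-1}v\|\le\frac{L_F}{\gamma}\|u-v\|.$$ (ii) $\mathrm{GVI}(A,F,C)$ admits a unique solution. Moreover, $x^*$ is a solution of $\mathrm{GVI}(A,F,C)$ if and only if $u^*:=Fx^*$ is a solution of the variational inequality $\mathrm{VI}(AF^{-1},C)$, and if and only if $v^*:=Ax^*$ is a solution of the inverse variational inequality $\mathrm{IVI}(FA^{-1},C)$.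
   Context: $\mathrm{GVI}(A,F,C)$: find $x^*\in H$ with $Fx^*\in C$ and $\langle Ax^*,y-Fx^*\rangle\ge0$ for all $y\in C$. $\mathrm{VI}(G,C)$: find $x^*\in C$ with $\langle Gx^*,y-x^*\rangle\ge0$ for all $y\in C$. $\mathrm{IVI}(B,C)$: find $x^*\in H$ with $Bx^*\in C$ and $\langle x^*,y-Bx^*\rangle\ge0$ for all $y\in C$. The couple $(A,F)$ is $\gamma$-strongly monotone if $\langle Ax-Ay,Fx-Fy\rangle\ge\gamma\|x-y\|^2$ for all $x,y\in H$. *)

theory Defs
  imports "HOL-Analysis.Analysis"
begin

definition GVI_sol :: "('a::real_inner \<Rightarrow> 'a) \<Rightarrow> ('a \<Rightarrow> 'a) \<Rightarrow> 'a set \<Rightarrow> 'a \<Rightarrow> bool" where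
  "GVI_sol A F C x \<longleftrightarrow> F x \<in> C \<and> (\<forall>y\<in>C. inner (A x) (y - F x) \<ge> 0)"

definition VI_sol :: "('a::real_inner \<Rightarrow> 'a) \<Rightarrow> 'a set \<Rightarrow> 'a \<Rightarrow> bool" where
  "VI_sol G C x \<longleftrightarrow> x \<in> C \<and> (\<forall>y\<in>C. inner (G x) (y - x) \<ge> 0)"

definition IVI_sol :: "('a::real_inner \<Rightarrow> 'a) \<Rightarrow> 'a set \<Rightarrow> 'a \<Rightarrow> bool" where
  "IVI_sol B C x \<longleftrightarrow> B x \<in> C \<and> (\<forall>y\<in>C. inner x (y - B x) \<ge> 0)"

definition strongly_monotone_couple :: "real \<Rightarrow> ('a::real_inner \<Rightarrow> 'a) \<Rightarrow> ('a \<Rightarrow> 'a) \<Rightarrow> bool" where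
  "strongly_monotone_couple \<gamma> A F \<longleftrightarrow>
     (\<forall>x y. inner (A x - A y) (F x - F y) \<ge> \<gamma> * (norm (x - y))\<^sup>2)"

end

theory Submission
  imports Defs
begin

text \<open>By Cauchy-Schwarz, strong monotonicity of the couple gives
  \<open>\<gamma> \<parallel>x - y\<parallel> \<le> L_A \<parallel>F x - F y\<parallel>\<close>, so \<open>F\<close> is injective with a Lipschitz inverse on its
  range. That range is closed by completeness and open by invariance of domain, so \<open>F\<close> is onto;
  by symmetry of the couple the same holds for \<open>A\<close>. Substituting \<open>u = F x\<close> turns
  \<open>GVI(A,F,C)\<close> into \<open>VI(A F\<inverse>, C)\<close>, whose operator is strongly monotone with modulus
  \<open>\<gamma>/L_F\<^sup>2\<close> and Lipschitz with constant \<open>L_A\<^sup>2/\<gamma>\<close>. For such an operator the projected step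
  \<open>u \<mapsto> P_C (u - t G u)\<close> is a contraction for small \<open>t > 0\<close>, and its fixed point solves
  the VI. Uniqueness is immediate from strong monotonicity.\<close>

lemma inj_lower_lipschitz:
  fixes f :: "'a::metric_space \<Rightarrow> 'b::metric_space"
  assumes "c > 0" and lower: "\<And>x y. c * dist x y \<le> dist (f x) (f y)"
  shows "inj f"
proof (rule injI)
  fix x y assume "f x = f y"
  then have "c * dist x y \<le> 0" using lower[of x y] by simp
  then show "x = y" using \<open>c > 0\<close> by (simp add: mult_le_0_iff)
qed

lemma closed_range_lower_lipschitz:
  fixes f :: "'a::complete_space \<Rightarrow> 'b::metric_space"
  assumes f_cont: "continuous_on UNIV f" and "c > 0"
    and lower: "\<And>x y. c * dist x y \<le> dist (f x) (f y)"
  shows "closed (range f)"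
  unfolding closed_sequential_limits
proof (intro allI impI, elim conjE)
  fix s l assume s: "\<forall>n. s n \<in> range f" and "s \<longlonglongrightarrow> l"
  have inv_f: "inv f (f x) = x" for x
    using inj_lower_lipschitz[OF \<open>c > 0\<close> lower] by (rule inv_f_f)
  have "(1 / c)-lipschitz_on (range f) (inv f)"
  proof (rule lipschitz_onI)
    fix u v assume "u \<in> range f" "v \<in> range f"
    then show "dist (inv f u) (inv f v) \<le> 1 / c * dist u v"
      using lower \<open>c > 0\<close> by (auto simp: inv_f field_simps)
  qed (use \<open>c > 0\<close> in simp)
  then have "Cauchy (\<lambda>n. inv f (s n))"
    using lipschitz_on_uniformly_continuous uniformly_continuous_on_Cauchy
      LIMSEQ_imp_Cauchy[OF \<open>s \<longlonglongrightarrow> l\<close>] s by blast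
  then obtain z where "(\<lambda>n. inv f (s n)) \<longlonglongrightarrow> z"
    using Cauchy_convergent_iff convergent_def by blast
  then have "(\<lambda>n. f (inv f (s n))) \<longlonglongrightarrow> f z"
    by (rule continuous_on_tendsto_compose[OF f_cont]) auto
  moreover have "f (inv f (s n)) = s n" for n
    using s by (auto simp: f_inv_into_f)
  ultimately have "l = f z"
    using \<open>s \<longlonglongrightarrow> l\<close> LIMSEQ_unique by auto
  then show "l \<in> range f" by simp
qed

lemma surj_lower_lipschitz:
  fixes f :: "'a::euclidean_space \<Rightarrow> 'a"
  assumes f_cont: "continuous_on UNIV f" and "c > 0"
    and lower: "\<And>x y. c * dist x y \<le> dist (f x) (f y)"
  shows "surj f"
proof -
  have "open (range f)"
    using invariance_of_domain[OF f_cont open_UNIV] inj_lower_lipschitz[OF \<open>c > 0\<close> lower]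
    by simp
  moreover have "closed (range f)"
    by (rule closed_range_lower_lipschitz[OF assms])
  ultimately show ?thesis
    using clopen[of "range f"] by simp
qed

lemma lipschitz_on_inv_lower_bound:
  fixes f :: "'a::metric_space \<Rightarrow> 'b::metric_space"
  assumes "L-lipschitz_on UNIV f" and "surj f"
  shows "dist u v / L \<le> dist (inv f u) (inv f v)"
proof -
  have "dist u v \<le> L * dist (inv f u) (inv f v)"
    using lipschitz_onD[OF assms(1), of "inv f u" "inv f v"] \<open>surj f\<close>
    by (simp add: surj_f_inv_f)
  then show ?thesis
    using lipschitz_on_nonneg[OF assms(1)]
    by (cases "L = 0") (simp_all add: field_simps)
qed

lemma strongly_monotone_couple_commute:
  "strongly_monotone_couple \<gamma> A F \<longleftrightarrow> strongly_monotone_couple \<gamma> F A"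
  unfolding strongly_monotone_couple_def by (simp add: inner_commute)

lemma strongly_monotone_couple_lower_bound:
  fixes A F :: "'a::real_inner \<Rightarrow> 'a"
  assumes "strongly_monotone_couple \<gamma> A F" and "L-lipschitz_on UNIV A"
  shows "\<gamma> * dist x y \<le> L * dist (F x) (F y)"
proof (cases "x = y")
  case True
  then show ?thesis using lipschitz_on_nonneg[OF assms(2)] by simp
next
  case False
  have "\<gamma> * (dist x y)\<^sup>2 \<le> inner (A x - A y) (F x - F y)"
    using assms(1) by (simp add: strongly_monotone_couple_def dist_norm)
  also have "\<dots> \<le> dist (A x) (A y) * dist (F x) (F y)"
    unfolding dist_norm by (rule norm_cauchy_schwarz)
  also have "\<dots> \<le> L * dist x y * dist (F x) (F y)"
    using lipschitz_onD[OF assms(2)] by (simp add: mult_right_mono)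
  finally have "(\<gamma> * dist x y) * dist x y \<le> (L * dist (F x) (F y)) * dist x y"
    by (simp add: power2_eq_square algebra_simps)
  then show ?thesis using False by simp
qed

lemma strongly_monotone_couple_le_lipschitz_mult:
  fixes A F :: "'a::euclidean_space \<Rightarrow> 'a"
  assumes "strongly_monotone_couple \<gamma> A F"
    and "L_A-lipschitz_on UNIV A" and "L_F-lipschitz_on UNIV F"
  shows "\<gamma> \<le> L_A * L_F"
proof -
  obtain b :: 'a where "b \<in> Basis" using nonempty_Basis by blast
  then have "dist b 0 = 1" by simp
  have "\<gamma> * dist b 0 \<le> L_A * dist (F b) (F 0)"
    by (rule strongly_monotone_couple_lower_bound[OF assms(1,2)])
  also have "\<dots> \<le> L_A * (L_F * dist b 0)"
    by (rule mult_left_mono[OF lipschitz_onD[OF assms(3)] lipschitz_on_nonneg[OF assms(2)]]) simp_all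
  finally show ?thesis using \<open>dist b 0 = 1\<close> by simp
qed

lemma strongly_monotone_couple_lipschitz_pos:
  fixes A F :: "'a::euclidean_space \<Rightarrow> 'a"
  assumes "strongly_monotone_couple \<gamma> A F" and "\<gamma> > 0"
    and "L_A-lipschitz_on UNIV A" and "L_F-lipschitz_on UNIV F"
  shows "L_A > 0" and "L_F > 0"
  using strongly_monotone_couple_le_lipschitz_mult[OF assms(1,3,4)] \<open>\<gamma> > 0\<close>
    lipschitz_on_nonneg[OF assms(3)] lipschitz_on_nonneg[OF assms(4)]
  by (auto simp: less_le)

lemma strongly_monotone_couple_inv_lipschitz:
  fixes A F :: "'a::real_inner \<Rightarrow> 'a"
  assumes "strongly_monotone_couple \<gamma> A F" and "\<gamma> > 0"
    and "L-lipschitz_on UNIV A" and "surj F"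
  shows "(L / \<gamma>)-lipschitz_on UNIV (inv F)"
proof (rule lipschitz_onI)
  fix u v
  have "\<gamma> * dist (inv F u) (inv F v) \<le> L * dist u v"
    using strongly_monotone_couple_lower_bound[OF assms(1,3)] \<open>surj F\<close>
    by (metis surj_f_inv_f)
  then show "dist (inv F u) (inv F v) \<le> L / \<gamma> * dist u v"
    using \<open>\<gamma> > 0\<close> by (simp add: field_simps)
qed (use lipschitz_on_nonneg[OF assms(3)] \<open>\<gamma> > 0\<close> in simp)

lemma strongly_monotone_couple_bij:
  fixes A F :: "'a::euclidean_space \<Rightarrow> 'a"
  assumes "strongly_monotone_couple \<gamma> A F" and "\<gamma> > 0"
    and "L-lipschitz_on UNIV A" and "continuous_on UNIV F" and "L > 0"
  shows "bij F"
proof -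
  have lower: "\<gamma> / L * dist x y \<le> dist (F x) (F y)" for x y
    using strongly_monotone_couple_lower_bound[OF assms(1,3)] \<open>L > 0\<close>
    by (simp add: field_simps)
  have "\<gamma> / L > 0" using assms by simp
  show ?thesis
    using inj_lower_lipschitz[OF \<open>\<gamma> / L > 0\<close> lower]
      surj_lower_lipschitz[OF assms(4) \<open>\<gamma> / L > 0\<close> lower]
    by (simp add: bij_def)
qed

lemma strongly_monotone_couple_comp_inv:
  fixes A F :: "'a::real_inner \<Rightarrow> 'a"
  assumes "strongly_monotone_couple \<gamma> A F" and "\<gamma> \<ge> 0"
    and "L-lipschitz_on UNIV F" and "surj F"
  shows "strongly_monotone_couple (\<gamma> / L\<^sup>2) (A \<circ> inv F) id"
  unfolding strongly_monotone_couple_def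
proof (intro allI)
  fix u v
  define x y where "x = inv F u" and "y = inv F v"
  have "F x = u" "F y = v"
    using \<open>surj F\<close> by (simp_all add: x_def y_def surj_f_inv_f)
  have "\<gamma> / L\<^sup>2 * (norm (u - v))\<^sup>2 = \<gamma> * (dist u v / L)\<^sup>2"
    by (simp add: dist_norm power_divide)
  also have "\<dots> \<le> \<gamma> * (norm (x - y))\<^sup>2"
    using lipschitz_on_inv_lower_bound[OF assms(3,4), of u v] lipschitz_on_nonneg[OF assms(3)] \<open>\<gamma> \<ge> 0\<close>
    by (intro mult_left_mono power_mono) (simp_all add: x_def y_def dist_norm)
  also have "\<dots> \<le> inner (A x - A y) (u - v)"
    using assms(1) \<open>F x = u\<close> \<open>F y = v\<close> unfolding strongly_monotone_couple_def by blast
  finally show "\<gamma> / L\<^sup>2 * (norm (u - v))\<^sup>2 \<le> inner ((A \<circ> inv F) u - (A \<circ> inv F) v) (id u - id v)"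
    by (simp add: x_def y_def)
qed

text \<open>Strong monotonicity of a single operator \<open>G\<close> is expressed as that of the couple \<open>(G, id)\<close>.\<close>

lemma projection_step_norm_bound:
  fixes G :: "'a::real_inner \<Rightarrow> 'a"
  assumes "strongly_monotone_couple \<mu> G id" and "M-lipschitz_on UNIV G" and "t \<ge> 0"
  shows "(norm ((u - v) - t *\<^sub>R (G u - G v)))\<^sup>2 \<le> (1 - 2 * t * \<mu> + t\<^sup>2 * M\<^sup>2) * (norm (u - v))\<^sup>2"
proof -
  define a g where "a = u - v" and "g = G u - G v"
  have "\<mu> * (norm a)\<^sup>2 \<le> inner g a"
    using assms(1) by (simp add: strongly_monotone_couple_def a_def g_def)
  moreover have "(norm g)\<^sup>2 \<le> M\<^sup>2 * (norm a)\<^sup>2"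
    using lipschitz_on_normD[OF assms(2)] by (simp add: a_def g_def power_mono flip: power_mult_distrib)
  moreover have "(norm (a - t *\<^sub>R g))\<^sup>2 = (norm a)\<^sup>2 - 2 * t * inner g a + t\<^sup>2 * (norm g)\<^sup>2"
    unfolding power2_norm_eq_inner
    by (simp add: inner_commute power2_eq_square algebra_simps)
  ultimately have "(norm (a - t *\<^sub>R g))\<^sup>2 \<le> (norm a)\<^sup>2 - 2 * t * (\<mu> * (norm a)\<^sup>2) + t\<^sup>2 * (M\<^sup>2 * (norm a)\<^sup>2)"
    using \<open>t \<ge> 0\<close> by (smt (verit) mult_left_mono zero_le_power2)
  then show ?thesis
    by (simp add: a_def g_def algebra_simps)
qed

lemma VI_sol_if_projection_fixpoint:
  fixes G :: "'a::euclidean_space \<Rightarrow> 'a"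
  assumes "C \<noteq> {}" "closed C" "convex C" and "t > 0"
    and fixpoint: "closest_point C (u - t *\<^sub>R G u) = u"
  shows "VI_sol G C u"
  unfolding VI_sol_def
proof
  show "u \<in> C"
    using closest_point_in_set[OF assms(2,1)] fixpoint by metis
  show "\<forall>y\<in>C. 0 \<le> inner (G u) (y - u)"
  proof
    fix y assume "y \<in> C"
    have "inner ((u - t *\<^sub>R G u) - u) (y - u) \<le> 0"
      using closest_point_dot[OF assms(3,2) \<open>y \<in> C\<close>, of "u - t *\<^sub>R G u"] fixpoint by simp
    then have "t * inner (G u) (y - u) \<ge> 0"
      by (simp add: inner_diff_left)
    then show "0 \<le> inner (G u) (y - u)"
      using \<open>t > 0\<close> by (simp add: zero_le_mult_iff)
  qed
qed

lemma VI_sol_exists: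
  fixes G :: "'a::euclidean_space \<Rightarrow> 'a"
  assumes C: "C \<noteq> {}" "closed C" "convex C"
    and "\<mu> > 0" and mono: "strongly_monotone_couple \<mu> G id"
    and lip: "M-lipschitz_on UNIV G"
  shows "\<exists>u. VI_sol G C u"
proof -
  have "\<mu> \<le> M"
    using strongly_monotone_couple_le_lipschitz_mult[OF mono lip lipschitz_on_id[folded id_def]]
    by simp
  \<comment> \<open>minimises \<open>1 - 2 t \<mu> + t\<^sup>2 M\<^sup>2\<close>, the squared contraction factor\<close>
  define t where "t = \<mu> / M\<^sup>2"
  define k where "k = 1 - \<mu>\<^sup>2 / M\<^sup>2"
  have "t > 0" "0 \<le> k" "k < 1"
    using \<open>\<mu> > 0\<close> \<open>\<mu> \<le> M\<close> by (simp_all add: t_def k_def power_mono)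
  define T where "T u = closest_point C (u - t *\<^sub>R G u)" for u
  have "dist (T u) (T v) \<le> sqrt k * dist u v" for u v
  proof -
    have "dist (T u) (T v) \<le> dist (u - t *\<^sub>R G u) (v - t *\<^sub>R G v)"
      unfolding T_def by (rule closest_point_lipschitz[OF C(3,2,1)])
    also have "\<dots> = norm ((u - v) - t *\<^sub>R (G u - G v))"
      by (simp add: dist_norm algebra_simps)
    also have "\<dots> \<le> sqrt k * dist u v"
    proof (rule power2_le_imp_le)
      have "1 - 2 * t * \<mu> + t\<^sup>2 * M\<^sup>2 = k"
        using \<open>\<mu> > 0\<close> \<open>\<mu> \<le> M\<close> by (simp add: t_def k_def field_simps power2_eq_square)
      then show "(norm ((u - v) - t *\<^sub>R (G u - G v)))\<^sup>2 \<le> (sqrt k * dist u v)\<^sup>2"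
        using projection_step_norm_bound[OF mono lip less_imp_le[OF \<open>t > 0\<close>]] \<open>0 \<le> k\<close>
        by (simp add: dist_norm power_mult_distrib)
    qed (use \<open>0 \<le> k\<close> in simp)
    finally show ?thesis .
  qed
  then obtain u where "T u = u"
    using banach_fix_type[of "sqrt k" T] \<open>0 \<le> k\<close> \<open>k < 1\<close> by auto
  then show ?thesis
    using VI_sol_if_projection_fixpoint[OF C \<open>t > 0\<close>] by (auto simp: T_def)
qed

lemma GVI_sol_iff_VI_sol:
  assumes "inj F"
  shows "GVI_sol A F C x \<longleftrightarrow> VI_sol (A \<circ> inv F) C (F x)"
  unfolding GVI_sol_def VI_sol_def using assms by simp

lemma GVI_sol_iff_IVI_sol:
  assumes "inj A"
  shows "GVI_sol A F C x \<longleftrightarrow> IVI_sol (F \<circ> inv A) C (A x)"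
  unfolding GVI_sol_def IVI_sol_def using assms by simp

lemma GVI_sol_unique:
  fixes A F :: "'a::real_inner \<Rightarrow> 'a"
  assumes "strongly_monotone_couple \<gamma> A F" and "\<gamma> > 0"
    and "GVI_sol A F C x" and "GVI_sol A F C y"
  shows "x = y"
proof -
  have "inner (A x) (F y - F x) \<ge> 0" "inner (A y) (F x - F y) \<ge> 0"
    using assms(3,4) unfolding GVI_sol_def by auto
  then have "inner (A x - A y) (F x - F y) \<le> 0"
    by (simp add: inner_diff_left inner_diff_right)
  moreover have "\<gamma> * (norm (x - y))\<^sup>2 \<le> inner (A x - A y) (F x - F y)"
    using assms(1) unfolding strongly_monotone_couple_def by blast
  ultimately have "\<gamma> * (norm (x - y))\<^sup>2 \<le> 0" by linarith
  then show ?thesis using \<open>\<gamma> > 0\<close> by (simp add: mult_le_0_iff)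
qed

lemma GVI_sol_ex1:
  fixes A F :: "'a::euclidean_space \<Rightarrow> 'a"
  assumes C: "C \<noteq> {}" "closed C" "convex C"
    and smc: "strongly_monotone_couple \<gamma> A F" and "\<gamma> > 0"
    and lip_A: "L_A-lipschitz_on UNIV A" and lip_F: "L_F-lipschitz_on UNIV F" and "bij F"
  shows "\<exists>!x. GVI_sol A F C x"
proof -
  have "\<gamma> / L_F\<^sup>2 > 0"
    using \<open>\<gamma> > 0\<close> strongly_monotone_couple_lipschitz_pos[OF smc \<open>\<gamma> > 0\<close> lip_A lip_F] by simp
  moreover have "strongly_monotone_couple (\<gamma> / L_F\<^sup>2) (A \<circ> inv F) id"
    using strongly_monotone_couple_comp_inv[OF smc _ lip_F bij_is_surj[OF \<open>bij F\<close>]] \<open>\<gamma> > 0\<close>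
    by simp
  moreover have "(L_A * (L_A / \<gamma>))-lipschitz_on UNIV (A \<circ> inv F)"
    using strongly_monotone_couple_inv_lipschitz[OF smc \<open>\<gamma> > 0\<close> lip_A bij_is_surj[OF \<open>bij F\<close>]]
      lipschitz_on_subset[OF lip_A subset_UNIV]
    by (rule lipschitz_on_compose)
  ultimately obtain u where "VI_sol (A \<circ> inv F) C u"
    using VI_sol_exists[OF C] by blast
  then have "GVI_sol A F C (inv F u)"
    using GVI_sol_iff_VI_sol[OF bij_is_inj[OF \<open>bij F\<close>]] \<open>bij F\<close> by (simp add: bij_is_surj surj_f_inv_f)
  then show ?thesis
    using GVI_sol_unique[OF smc \<open>\<gamma> > 0\<close>] by blast
qed

theorem theorem2p1:
  fixes A F :: "'a::euclidean_space \<Rightarrow> 'a" and C :: "'a set"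
    and L_A L_F \<gamma> :: real
  assumes "C \<noteq> {}" and "closed C" and "convex C"
    and "L_A-lipschitz_on UNIV A" and "L_F-lipschitz_on UNIV F"
    and "\<gamma> > 0" and "strongly_monotone_couple \<gamma> A F"
  shows "bij A \<and> bij F
    \<and> (\<exists>K. K-lipschitz_on UNIV (inv A)) \<and> (\<exists>K. K-lipschitz_on UNIV (inv F))
    \<and> (\<forall>u v. norm (u - v) / L_F \<le> norm (inv F u - inv F v)
              \<and> norm (inv F u - inv F v) \<le> L_A / \<gamma> * norm (u - v))
    \<and> (\<forall>u v. norm (u - v) / L_A \<le> norm (inv A u - inv A v)
              \<and> norm (inv A u - inv A v) \<le> L_F / \<gamma> * norm (u - v))
    \<and> (\<exists>!x. GVI_sol A F C x)
    \<and> (\<forall>x. GVI_sol A F C x \<longleftrightarrow> VI_sol (A \<circ> inv F) C (F x))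
    \<and> (\<forall>x. GVI_sol A F C x \<longleftrightarrow> IVI_sol (F \<circ> inv A) C (A x))"
proof -
  note C = assms(1-3) and lip_A = assms(4) and lip_F = assms(5) and smc_AF = assms(7)
  have smc_FA: "strongly_monotone_couple \<gamma> F A"
    using smc_AF strongly_monotone_couple_commute by blast
  note L_pos = strongly_monotone_couple_lipschitz_pos[OF smc_AF \<open>\<gamma> > 0\<close> lip_A lip_F]
  have bij_F: "bij F" and bij_A: "bij A"
    using strongly_monotone_couple_bij[OF smc_AF \<open>\<gamma> > 0\<close> lip_A lipschitz_on_continuous_on[OF lip_F]]
      strongly_monotone_couple_bij[OF smc_FA \<open>\<gamma> > 0\<close> lip_F lipschitz_on_continuous_on[OF lip_A]] L_pos
    by blast+
  have lip_inv_F: "(L_A / \<gamma>)-lipschitz_on UNIV (inv F)"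
    and lip_inv_A: "(L_F / \<gamma>)-lipschitz_on UNIV (inv A)"
    using strongly_monotone_couple_inv_lipschitz[OF smc_AF \<open>\<gamma> > 0\<close> lip_A bij_is_surj[OF bij_F]]
      strongly_monotone_couple_inv_lipschitz[OF smc_FA \<open>\<gamma> > 0\<close> lip_F bij_is_surj[OF bij_A]]
    by blast+
  have "norm (u - v) / L_F \<le> norm (inv F u - inv F v)"
    and "norm (u - v) / L_A \<le> norm (inv A u - inv A v)" for u v
    using lipschitz_on_inv_lower_bound[OF lip_F bij_is_surj[OF bij_F]]
      lipschitz_on_inv_lower_bound[OF lip_A bij_is_surj[OF bij_A]]
    by (simp_all add: dist_norm)
  then show ?thesis
    using bij_A bij_F lip_inv_A lip_inv_F lipschitz_on_normD[OF lip_inv_A] lipschitz_on_normD[OF lip_inv_F]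
      GVI_sol_ex1[OF C smc_AF \<open>\<gamma> > 0\<close> lip_A lip_F bij_F]
      GVI_sol_iff_VI_sol[OF bij_is_inj[OF bij_F]] GVI_sol_iff_IVI_sol[OF bij_is_inj[OF bij_A]]
    by blast
qed

end
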